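(* Let $\boldsymbol\pi$ be a prime of $H_{1,2,2}$ and $p$ a rational prime. Then $\boldsymbol\pi$ divides $p$ in $H_{1,2,2}$ (i.e. $p=\boldsymbol\pi\mathbf{a}$ or $p=\mathbf{a}\boldsymbol\pi$ for some $\mathbf{a}\in H_{1,2,2}$) if and only if $N(\boldsymbol\pi)=p$; moreover, if $N(\boldsymbol\pi)=p$ then $\boldsymbol\pi$ divides $p$ both on the left and on the right.
   Context: Let $\mathbf{i},\mathbf{j},\mathbf{k}$ be the standard quaternion units; $\overline{\mathbf{q}}$ is quaternion conjugation and $N(\mathbf{q})=\mathbf{q}\overline{\mathbf{q}}$. $H_{1,2,2}$ is the subring of the quaternions equal to the $\mathbb{Z}$-module generated by $\mathbf{v}_1=1$, $\mathbf{v}_2=\mathbf{i}$, $\mathbf{v}_3=\tfrac12(1+\mathbf{i}+\sqrt2\,\mathbf{j})$, $\mathbf{v}_4=\tfrac12(1+\mathbf{i}+\sqrt2\,\mathbf{k})$. A unit is an element invertible in $H_{1,2,2}$. A prime of $H_{1,2,2}$ is a nonzero nonunit $\boldsymbol\pi$ such that whenever $\boldsymbol\pi=\mathbf{a}\mathbf{b}$ in $H_{1,2,2}$, one of $\mathbf{a},\mathbf{b}$ is a unit. *)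

theory Defs
  imports Complex_Main "HOL-Computational_Algebra.Primes"
begin

text \<open>Real quaternions a + b i + c j + d k, with i^2 = j^2 = k^2 = ijk = -1.\<close>
datatype quat = Quat (Re: real) (Im1: real) (Im2: real) (Im3: real)

definition qmul :: "quat \<Rightarrow> quat \<Rightarrow> quat" (infixl "\<star>" 70) where
  "q \<star> r = Quat
     (Re q * Re r - Im1 q * Im1 r - Im2 q * Im2 r - Im3 q * Im3 r)
     (Re q * Im1 r + Im1 q * Re r + Im2 q * Im3 r - Im3 q * Im2 r)
     (Re q * Im2 r - Im1 q * Im3 r + Im2 q * Re r + Im3 q * Im1 r)
     (Re q * Im3 r + Im1 q * Im2 r - Im2 q * Im1 r + Im3 q * Re r)"

definition qconj :: "quat \<Rightarrow> quat" where
  "qconj q = Quat (Re q) (- Im1 q) (- Im2 q) (- Im3 q)"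

definition qreal :: "real \<Rightarrow> quat" where
  "qreal x = Quat x 0 0 0"

definition qN :: "quat \<Rightarrow> quat" where
  "qN q = q \<star> qconj q"

definition v1 :: quat where "v1 = Quat 1 0 0 0"
definition v2 :: quat where "v2 = Quat 0 1 0 0"
definition v3 :: quat where "v3 = Quat (1/2) (1/2) (sqrt 2 / 2) 0"
definition v4 :: quat where "v4 = Quat (1/2) (1/2) 0 (sqrt 2 / 2)"

definition qlin :: "int \<Rightarrow> int \<Rightarrow> int \<Rightarrow> int \<Rightarrow> quat" where
  "qlin a b c d = Quat
     (of_int a * Re v1 + of_int b * Re v2 + of_int c * Re v3 + of_int d * Re v4)
     (of_int a * Im1 v1 + of_int b * Im1 v2 + of_int c * Im1 v3 + of_int d * Im1 v4)
     (of_int a * Im2 v1 + of_int b * Im2 v2 + of_int c * Im2 v3 + of_int d * Im2 v4)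
     (of_int a * Im3 v1 + of_int b * Im3 v2 + of_int c * Im3 v3 + of_int d * Im3 v4)"

definition H122 :: "quat set" where
  "H122 = {qlin a b c d | a b c d. True}"

definition H_unit :: "quat \<Rightarrow> bool" where
  "H_unit u \<longleftrightarrow> u \<in> H122 \<and> (\<exists>v\<in>H122. u \<star> v = qreal 1 \<and> v \<star> u = qreal 1)"

definition H_prime :: "quat \<Rightarrow> bool" where
  "H_prime \<pi> \<longleftrightarrow> \<pi> \<in> H122 \<and> \<pi> \<noteq> qreal 0 \<and> \<not> H_unit \<pi> \<and>
     (\<forall>a\<in>H122. \<forall>b\<in>H122. \<pi> = a \<star> b \<longrightarrow> H_unit a \<or> H_unit b)"

end

theory Submission
  imports Defs
begin

(* Norms of elements of H122 are natural numbers and the norm is multiplicative, so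
   p = \<pi> a (or p = a \<pi>) forces N(\<pi>) to be 1, p or p^2. The value 1 makes \<pi> a unit. The
   value p^2 makes a a unit and \<pi> = p * conj a; but p = \<delta> * conj \<delta> for some \<delta> of norm
   p, so \<pi> = \<delta> * (conj \<delta> * conj a) splits into two non-units. Conversely N(\<pi>) = p gives
   p = \<pi> * conj \<pi> = conj \<pi> * \<pi>. *)

lemma quat_eqI:
  "Re q = Re r \<Longrightarrow> Im1 q = Im1 r \<Longrightarrow> Im2 q = Im2 r \<Longrightarrow> Im3 q = Im3 r \<Longrightarrow> q = r"
  by (cases q; cases r) auto

instantiation quat :: ring_1
begin
definition zero_quat_def: "0 = Quat 0 0 0 0"
definition one_quat_def: "1 = Quat 1 0 0 0"
definition plus_quat_def: "q + r = Quat (Re q + Re r) (Im1 q + Im1 r) (Im2 q + Im2 r) (Im3 q + Im3 r)"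
definition minus_quat_def: "q - r = Quat (Re q - Re r) (Im1 q - Im1 r) (Im2 q - Im2 r) (Im3 q - Im3 r)"
definition uminus_quat_def: "- q = Quat (- Re q) (- Im1 q) (- Im2 q) (- Im3 q)"
definition times_quat_def: "q * r = q \<star> r"
instance
  by standard (auto intro!: quat_eqI simp: zero_quat_def one_quat_def plus_quat_def minus_quat_def
      uminus_quat_def times_quat_def qmul_def algebra_simps)
end

lemma quat_component_simps [simp]:
  "Re 0 = 0" "Im1 0 = 0" "Im2 0 = 0" "Im3 0 = 0"
  "Re 1 = 1" "Im1 1 = 0" "Im2 1 = 0" "Im3 1 = 0"
  "Re (q + r) = Re q + Re r" "Im1 (q + r) = Im1 q + Im1 r"
  "Im2 (q + r) = Im2 q + Im2 r" "Im3 (q + r) = Im3 q + Im3 r"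
  "Re (q - r) = Re q - Re r" "Im1 (q - r) = Im1 q - Im1 r"
  "Im2 (q - r) = Im2 q - Im2 r" "Im3 (q - r) = Im3 q - Im3 r"
  "Re (- q) = - Re q" "Im1 (- q) = - Im1 q" "Im2 (- q) = - Im2 q" "Im3 (- q) = - Im3 q"
  "Re (q * r) = Re q * Re r - Im1 q * Im1 r - Im2 q * Im2 r - Im3 q * Im3 r"
  "Im1 (q * r) = Re q * Im1 r + Im1 q * Re r + Im2 q * Im3 r - Im3 q * Im2 r"
  "Im2 (q * r) = Re q * Im2 r - Im1 q * Im3 r + Im2 q * Re r + Im3 q * Im1 r"
  "Im3 (q * r) = Re q * Im3 r + Im1 q * Im2 r - Im2 q * Im1 r + Im3 q * Re r"
  "Re (qconj q) = Re q" "Im1 (qconj q) = - Im1 q" "Im2 (qconj q) = - Im2 q" "Im3 (qconj q) = - Im3 q"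
  "Re (qreal x) = x" "Im1 (qreal x) = 0" "Im2 (qreal x) = 0" "Im3 (qreal x) = 0"
  by (simp_all add: zero_quat_def one_quat_def plus_quat_def minus_quat_def
      uminus_quat_def times_quat_def qmul_def qconj_def qreal_def)

lemma qmul_eq_times: "q \<star> r = q * r"
  by (simp add: times_quat_def)

lemma qreal_0 [simp]: "qreal 0 = 0"
  and qreal_1 [simp]: "qreal 1 = 1"
  and qreal_mult: "qreal (x * y) = qreal x * qreal y"
  and qreal_commute: "qreal x * q = q * qreal x"
  and qconj_qreal [simp]: "qconj (qreal x) = qreal x"
  and qconj_qconj [simp]: "qconj (qconj q) = q"
  and qconj_mult: "qconj (q * r) = qconj r * qconj q"
  by (auto intro!: quat_eqI simp: algebra_simps)

lemma qreal_eq_iff [simp]: "qreal x = qreal y \<longleftrightarrow> x = y"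
  by (simp add: qreal_def)

lemma qreal_eq_0_iff [simp]: "qreal x = 0 \<longleftrightarrow> x = 0"
  by (metis qreal_0 qreal_eq_iff)

definition qnorm :: "quat \<Rightarrow> real" where
  "qnorm q = Re q ^ 2 + Im1 q ^ 2 + Im2 q ^ 2 + Im3 q ^ 2"

lemma mult_qconj: "q * qconj q = qreal (qnorm q)"
  and qconj_mult_self: "qconj q * q = qreal (qnorm q)"
  by (auto intro!: quat_eqI simp: qnorm_def power2_eq_square algebra_simps)

lemma qN_eq_qnorm: "qN q = qreal (qnorm q)"
  by (simp add: qN_def qmul_eq_times mult_qconj)

lemma qnorm_mult: "qnorm (q * r) = qnorm q * qnorm r"
  by (simp add: qnorm_def power2_eq_square algebra_simps)

lemma qnorm_qconj [simp]: "qnorm (qconj q) = qnorm q"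
  and qnorm_qreal [simp]: "qnorm (qreal x) = x ^ 2"
  and qnorm_nonneg: "qnorm q \<ge> 0"
  by (simp_all add: qnorm_def)

lemma qnorm_eq_0_iff [simp]: "qnorm q = 0 \<longleftrightarrow> q = 0"
proof
  assume "qnorm q = 0"
  then have "Re q = 0 \<and> Im1 q = 0 \<and> Im2 q = 0 \<and> Im3 q = 0"
    unfolding qnorm_def by (simp add: add_nonneg_eq_0_iff)
  then show "q = 0"
    by (auto intro: quat_eqI)
qed (simp add: qnorm_def)

lemma qlin_eq_Quat:
  "qlin a b c d = Quat (a + (c + d) / 2) (b + (c + d) / 2) (c * sqrt 2 / 2) (d * sqrt 2 / 2)"
  by (simp add: qlin_def v1_def v2_def v3_def v4_def field_simps)

lemma qlin_mult: "qlin a b c d * qlin a' b' c' d' =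
  qlin (a*a' - b*b' - b*c' - d*b' - c*c' - d*d' - d*c')
       (a*b' + b*a' + c*b' + b*d' + c*d' - d*c')
       (a*c' - b*d' + c*a' + d*b' + c*c' + d*c')
       (a*d' + b*c' - c*b' + d*a' + d*d' + d*c')"
  by (rule quat_eqI) (simp_all add: qlin_eq_Quat field_simps)

lemma qlin_add: "qlin a b c d + qlin a' b' c' d' = qlin (a + a') (b + b') (c + c') (d + d')"
  and qlin_uminus: "- qlin a b c d = qlin (- a) (- b) (- c) (- d)"
  and qconj_qlin: "qconj (qlin a b c d) = qlin (a + c + d) (- b) (- c) (- d)"
  and qreal_of_int_eq_qlin: "qreal (of_int n) = qlin n 0 0 0"
  by (auto intro!: quat_eqI simp: qlin_eq_Quat field_simps)

lemma qnorm_qlin: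
  "qnorm (qlin a b c d) = of_int (a^2 + b^2 + (c + d) * (a + b) + c^2 + c * d + d^2)"
  by (simp add: qnorm_def qlin_eq_Quat power2_eq_square field_simps)

lemma H122_iff: "h \<in> H122 \<longleftrightarrow> (\<exists>a b c d. h = qlin a b c d)"
  by (simp add: H122_def)

lemma qlin_in_H122 [simp]: "qlin a b c d \<in> H122"
  by (auto simp: H122_iff)

lemma H122_mult: "q \<in> H122 \<Longrightarrow> r \<in> H122 \<Longrightarrow> q * r \<in> H122"
  unfolding H122_iff by (auto simp: qlin_mult) blast

lemma H122_add: "q \<in> H122 \<Longrightarrow> r \<in> H122 \<Longrightarrow> q + r \<in> H122"
  unfolding H122_iff by (auto simp: qlin_add) blast

lemma H122_uminus: "q \<in> H122 \<Longrightarrow> - q \<in> H122"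
  unfolding H122_iff by (auto simp: qlin_uminus) blast

lemma H122_qconj: "q \<in> H122 \<Longrightarrow> qconj q \<in> H122"
  unfolding H122_iff by (auto simp: qconj_qlin) blast

lemma H122_qreal_of_int: "qreal (of_int n) \<in> H122"
  unfolding H122_iff by (auto simp: qreal_of_int_eq_qlin)

lemma H122_diff: "q \<in> H122 \<Longrightarrow> r \<in> H122 \<Longrightarrow> q - r \<in> H122"
  using H122_add[of q "- r"] H122_uminus[of r] by simp

lemma H122_0: "0 \<in> H122"
  and H122_1: "1 \<in> H122"
  and H122_qreal_of_nat: "qreal (real n) \<in> H122"
  using H122_qreal_of_int[of 0] H122_qreal_of_int[of 1] H122_qreal_of_int[of "int n"] by simp_all

lemma qnorm_H122_Nats: "h \<in> H122 \<Longrightarrow> qnorm h \<in> \<nat>"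
proof -
  assume "h \<in> H122"
  then obtain a b c d where h: "h = qlin a b c d"
    by (auto simp: H122_iff)
  define n where "n = a^2 + b^2 + (c + d) * (a + b) + c^2 + c * d + d^2"
  have "qnorm h = of_int n"
    by (simp add: h n_def qnorm_qlin)
  moreover have "n \<ge> 0"
    using qnorm_nonneg[of h] by (simp add: \<open>qnorm h = of_int n\<close>)
  ultimately show ?thesis
    by (metis of_nat_in_Nats nonneg_int_cases of_int_of_nat_eq)
qed

lemma qnorm_H122_ge_1: "h \<in> H122 \<Longrightarrow> h \<noteq> 0 \<Longrightarrow> qnorm h \<ge> 1"
  by (metis Nats_cases qnorm_H122_Nats qnorm_eq_0_iff of_nat_0 of_nat_1 of_nat_le_iff less_one not_le)

lemma Im2_H122: "h \<in> H122 \<Longrightarrow> \<exists>c::int. Im2 h = c * sqrt 2 / 2"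
  by (auto simp: H122_iff qlin_eq_Quat)

lemma H_unit_iff_qnorm_eq_1:
  assumes "h \<in> H122"
  shows "H_unit h \<longleftrightarrow> qnorm h = 1"
proof
  assume "H_unit h"
  then obtain g where "g \<in> H122" "h * g = 1"
    by (auto simp: H_unit_def qmul_eq_times)
  then have "qnorm h * qnorm g = 1"
    using qnorm_mult[of h g] by (simp add: qnorm_def)
  moreover obtain m n :: nat where "qnorm h = m" "qnorm g = n"
    using \<open>g \<in> H122\<close> assms by (metis qnorm_H122_Nats Nats_cases)
  ultimately have "m * n = 1"
    by (metis of_nat_1 of_nat_eq_iff of_nat_mult)
  then show "qnorm h = 1"
    using \<open>qnorm h = m\<close> by simp
next
  assume "qnorm h = 1"
  then show "H_unit h"
    unfolding H_unit_def using assms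
    by (auto intro!: bexI[of _ "qconj h"] simp: qmul_eq_times mult_qconj qconj_mult_self H122_qconj)
qed

lemma sq_dist_nearest_int_le: "(v - of_int \<lfloor>v + 1/2\<rfloor>)\<^sup>2 \<le> (1/4 :: real)"
proof -
  have "\<bar>v - of_int \<lfloor>v + 1/2\<rfloor>\<bar> \<le> 1/2"
    by linarith
  then have "\<bar>v - of_int \<lfloor>v + 1/2\<rfloor>\<bar>\<^sup>2 \<le> (1/2)\<^sup>2"
    by (intro power_mono) auto
  then show ?thesis
    by (simp add: power2_eq_square)
qed

text \<open>Round the \<open>j\<close>- and \<open>k\<close>-coordinates to multiples of \<open>sqrt 2 / 2\<close> first (squared
  error at most \<open>1/8\<close> each), then the other two to integers shifted by half the sum of the
  two multipliers (squared error at most \<open>1/4\<close> each).\<close>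
lemma H122_approx: "\<exists>q\<in>H122. qnorm (t - q) < 1"
proof -
  define c where "c = \<lfloor>Im2 t * sqrt 2 + 1/2\<rfloor>"
  define d where "d = \<lfloor>Im3 t * sqrt 2 + 1/2\<rfloor>"
  define a where "a = \<lfloor>Re t - (c + d) / 2 + 1/2\<rfloor>"
  define b where "b = \<lfloor>Im1 t - (c + d) / 2 + 1/2\<rfloor>"
  have scale: "(x - k * sqrt 2 / 2)\<^sup>2 = (x * sqrt 2 - k)\<^sup>2 / 2" for x k :: real
    by (simp add: power2_eq_square algebra_simps)
  have "(Im2 t - c * sqrt 2 / 2)\<^sup>2 \<le> 1/8" "(Im3 t - d * sqrt 2 / 2)\<^sup>2 \<le> 1/8"
    using sq_dist_nearest_int_le[of "Im2 t * sqrt 2"] sq_dist_nearest_int_le[of "Im3 t * sqrt 2"]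
    unfolding scale c_def d_def by simp_all
  moreover have "(Re t - (a + (c + d) / 2))\<^sup>2 \<le> 1/4" "(Im1 t - (b + (c + d) / 2))\<^sup>2 \<le> 1/4"
    using sq_dist_nearest_int_le[of "Re t - (c + d) / 2"] sq_dist_nearest_int_le[of "Im1 t - (c + d) / 2"]
    unfolding a_def b_def by (simp_all add: algebra_simps)
  ultimately have "qnorm (t - qlin a b c d) < 1"
    by (simp add: qnorm_def qlin_eq_Quat)
  then show ?thesis
    using qlin_in_H122 by blast
qed

lemma H122_left_division:
  assumes "\<alpha> \<in> H122" "\<beta> \<noteq> 0"
  shows "\<exists>q\<in>H122. qnorm (\<alpha> - q * \<beta>) < qnorm \<beta>"
proof -
  have pos: "qnorm \<beta> > 0"
    using assms(2) qnorm_nonneg[of \<beta>] by (simp add: order_less_le)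
  define t where "t = \<alpha> * qconj \<beta> * qreal (1 / qnorm \<beta>)"
  obtain q where q: "q \<in> H122" "qnorm (t - q) < 1"
    using H122_approx by blast
  have "t * \<beta> = \<alpha> * (qconj \<beta> * \<beta>) * qreal (1 / qnorm \<beta>)"
    unfolding t_def by (simp add: mult.assoc qreal_commute)
  also have "\<dots> = \<alpha> * qreal (qnorm \<beta> * (1 / qnorm \<beta>))"
    by (simp only: qconj_mult_self mult.assoc qreal_mult)
  also have "\<dots> = \<alpha>"
    using assms(2) by simp
  finally have "\<alpha> - q * \<beta> = (t - q) * \<beta>"
    by (simp add: algebra_simps)
  then have "qnorm (\<alpha> - q * \<beta>) = qnorm (t - q) * qnorm \<beta>"
    by (simp add: qnorm_mult)
  also have "\<dots> < qnorm \<beta>"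
    using q(2) pos by simp
  finally show ?thesis
    using q(1) by blast
qed

text \<open>A nonzero element of least norm in the left ideal \<open>H122 \<beta> + H122 \<alpha>\<close> right-divides
  all of it: the remainder of a left division by it stays in the ideal and has smaller norm.\<close>
lemma H122_right_gcd:
  assumes "\<alpha> \<in> H122" "\<beta> \<in> H122" "\<beta> \<noteq> 0"
  obtains \<delta> \<xi> \<eta> u w where "\<delta> = \<xi> * \<beta> + \<eta> * \<alpha>" "\<beta> = u * \<delta>" "\<alpha> = w * \<delta>"
    and "\<xi> \<in> H122" "\<eta> \<in> H122" "u \<in> H122" "w \<in> H122"
proof -
  define L where "L = {\<xi> * \<beta> + \<eta> * \<alpha> | \<xi> \<eta>. \<xi> \<in> H122 \<and> \<eta> \<in> H122}"
  have L_H122: "x \<in> H122" if "x \<in> L" for x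
    using that assms by (auto simp: L_def intro: H122_add H122_mult)
  have "\<beta> = 1 * \<beta> + 0 * \<alpha>" "\<alpha> = 0 * \<beta> + 1 * \<alpha>"
    by simp_all
  then have "\<beta> \<in> L" "\<alpha> \<in> L"
    unfolding L_def using H122_0 H122_1 by blast+
  then obtain \<delta> where \<delta>: "\<delta> \<in> L" "\<delta> \<noteq> 0"
    and least: "\<And>x. x \<in> L \<Longrightarrow> x \<noteq> 0 \<Longrightarrow> nat \<lfloor>qnorm \<delta>\<rfloor> \<le> nat \<lfloor>qnorm x\<rfloor>"
    using ex_has_least_nat[of "\<lambda>x. x \<in> L \<and> x \<noteq> 0" \<beta> "\<lambda>x. nat \<lfloor>qnorm x\<rfloor>"] assms(3) by blast
  have right_dvd: "\<exists>q\<in>H122. x = q * \<delta>" if x: "x \<in> L" for x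
  proof -
    obtain q where q: "q \<in> H122" "qnorm (x - q * \<delta>) < qnorm \<delta>"
      using H122_left_division[OF L_H122[OF x] \<delta>(2)] by blast
    have "x - q * \<delta> \<in> L"
    proof -
      obtain \<xi> \<eta> \<xi>' \<eta>' where "x = \<xi> * \<beta> + \<eta> * \<alpha>" "\<delta> = \<xi>' * \<beta> + \<eta>' * \<alpha>"
        and H: "\<xi> \<in> H122" "\<eta> \<in> H122" "\<xi>' \<in> H122" "\<eta>' \<in> H122"
        using x \<delta>(1) unfolding L_def by blast
      then have "x - q * \<delta> = (\<xi> - q * \<xi>') * \<beta> + (\<eta> - q * \<eta>') * \<alpha>"
        by (simp add: algebra_simps)
      then show ?thesis
        unfolding L_def using H q(1) by (blast intro: H122_diff H122_mult)
    qed
    moreover have "nat \<lfloor>qnorm (x - q * \<delta>)\<rfloor> < nat \<lfloor>qnorm \<delta>\<rfloor>"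
    proof -
      obtain m n :: nat where "qnorm (x - q * \<delta>) = m" "qnorm \<delta> = n"
        using qnorm_H122_Nats L_H122 \<delta>(1) \<open>x - q * \<delta> \<in> L\<close> by (metis Nats_cases)
      then show ?thesis
        using q(2) by simp
    qed
    ultimately have "x - q * \<delta> = 0"
      using least leD by blast
    then show ?thesis
      using q(1) by auto
  qed
  obtain \<xi> \<eta> where "\<delta> = \<xi> * \<beta> + \<eta> * \<alpha>" "\<xi> \<in> H122" "\<eta> \<in> H122"
    using \<delta>(1) unfolding L_def by blast
  moreover obtain u w where "\<beta> = u * \<delta>" "\<alpha> = w * \<delta>" "u \<in> H122" "w \<in> H122"
    using right_dvd \<open>\<beta> \<in> L\<close> \<open>\<alpha> \<in> L\<close> by blast
  ultimately show ?thesis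
    using that by blast
qed

lemma prime_dvd_diff_squares_imp_eq:
  fixes P x y :: int
  assumes "prime P" "0 \<le> x" "0 \<le> y" "2 * x < P" "2 * y < P" "P dvd x\<^sup>2 - y\<^sup>2"
  shows "x = y"
proof -
  have "x\<^sup>2 - y\<^sup>2 = (x - y) * (x + y)"
    by (simp add: power2_eq_square algebra_simps)
  then have "P dvd (x - y) * (x + y)"
    using assms(6) by simp
  then have "P dvd x - y \<or> P dvd x + y"
    using assms(1) prime_dvd_mult_iff by blast
  moreover have "\<bar>x - y\<bar> < P" "\<bar>x + y\<bar> < P"
    using assms(2-5) by linarith+
  ultimately have "x - y = 0 \<or> x + y = 0"
    using dvd_imp_le_int[of "x - y" P] dvd_imp_le_int[of "x + y" P] by linarith
  then show ?thesis
    using assms(2,3) by linarith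
qed

text \<open>The \<open>(p + 1) / 2\<close> values of \<open>x\<^sup>2\<close> and of \<open>-1 - y\<^sup>2\<close> for \<open>0 \<le> x, y \<le> (p - 1) / 2\<close>
  are pairwise incongruent modulo an odd prime \<open>p\<close>, so the two families must meet.\<close>
lemma prime_dvd_sum_two_squares_plus_one:
  fixes p :: int
  assumes "prime p"
  shows "\<exists>x y. p dvd x\<^sup>2 + y\<^sup>2 + 1"
proof (cases "p = 2")
  case True
  then show ?thesis
    by (intro exI[of _ 1] exI[of _ 0]) simp
next
  case False
  then have "odd p"
    using assms prime_ge_2_int[OF assms] by (intro prime_odd_int) auto
  define S where "S = {0 .. (p - 1) div 2}"
  define f where "f x = x\<^sup>2 mod p" for x
  define g where "g y = (- 1 - y\<^sup>2) mod p" for y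
  have fin: "finite S"
    by (simp add: S_def)
  have small: "0 \<le> x" "2 * x < p" if "x \<in> S" for x
    using that \<open>odd p\<close> by (auto simp: S_def elim!: oddE)
  have "inj_on f S"
    using assms small
    by (intro inj_onI) (auto simp: f_def mod_eq_dvd_iff intro: prime_dvd_diff_squares_imp_eq)
  moreover have "inj_on g S"
  proof (rule inj_onI)
    fix y y' assume "y \<in> S" "y' \<in> S" "g y = g y'"
    then have "p dvd y'\<^sup>2 - y\<^sup>2"
      unfolding g_def mod_eq_dvd_iff by simp
    then show "y = y'"
      using assms small \<open>y \<in> S\<close> \<open>y' \<in> S\<close> by (intro prime_dvd_diff_squares_imp_eq[symmetric])
  qed
  moreover have "2 * card S = card {0..<p} + 1"
    using \<open>odd p\<close> prime_gt_0_int[OF assms] by (auto simp: S_def elim!: oddE)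
  ultimately have card_sum: "card (f ` S) + card (g ` S) = card {0..<p} + 1"
    by (simp add: card_image)
  have range_mod: "f ` S \<union> g ` S \<subseteq> {0..<p}"
    using prime_gt_0_int[OF assms] by (auto simp: f_def g_def)
  have "card (f ` S) + card (g ` S) = card (f ` S \<union> g ` S) + card (f ` S \<inter> g ` S)"
    by (rule card_Un_Int[OF finite_imageI[OF fin] finite_imageI[OF fin]])
  moreover have "card (f ` S \<union> g ` S) \<le> card {0..<p}"
    by (rule card_mono[OF finite_atLeastLessThan_int range_mod])
  ultimately have "card (f ` S \<inter> g ` S) \<noteq> 0"
    using card_sum by linarith
  then have "f ` S \<inter> g ` S \<noteq> {}"
    by force
  then obtain z where "z \<in> f ` S" "z \<in> g ` S"
    by blast
  then obtain x y where "f x = g y"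
    by (elim imageE) simp
  then have "p dvd x\<^sup>2 - (- 1 - y\<^sup>2)"
    unfolding f_def g_def by (simp only: mod_eq_dvd_iff)
  moreover have "x\<^sup>2 - (- 1 - y\<^sup>2) = x\<^sup>2 + y\<^sup>2 + 1"
    by simp
  ultimately have "p dvd x\<^sup>2 + y\<^sup>2 + 1"
    by (simp only:)
  then show ?thesis
    by blast
qed

lemma qnorm_factors_of_prime_square:
  assumes "prime p" "x \<in> H122" "y \<in> H122" "qnorm x * qnorm y = real p ^ 2"
  shows "qnorm x = 1 \<and> qnorm y = real p ^ 2 \<or> qnorm x = real p \<and> qnorm y = real p
    \<or> qnorm x = real p ^ 2 \<and> qnorm y = 1"
proof -
  obtain m n :: nat where mn: "qnorm x = m" "qnorm y = n"
    using assms(2,3) qnorm_H122_Nats by (metis Nats_cases)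
  then have "m * n = p ^ 2"
    using assms(4) by (metis of_nat_eq_iff of_nat_mult of_nat_power)
  moreover obtain i where "i \<le> 2" "m = p ^ i"
    using divides_primepow_nat[OF assms(1)] \<open>m * n = p ^ 2\<close> by (metis dvd_triv_left)
  moreover have "p > 0"
    using assms(1) prime_gt_0_nat by blast
  ultimately have "m = 1 \<and> n = p ^ 2 \<or> m = p \<and> n = p \<or> m = p ^ 2 \<and> n = 1"
    by (auto simp: le_Suc_eq numeral_2_eq_2)
  then show ?thesis
    using mn by auto
qed

lemma Im2_qreal_times_H122_ne:
  assumes "2 \<le> p" "\<beta> \<in> H122"
  shows "Im2 (qreal (real p) * \<beta>) \<noteq> sqrt 2 / 2"
proof
  obtain c :: int where c: "Im2 \<beta> = c * sqrt 2 / 2"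
    using Im2_H122[OF assms(2)] by blast
  assume "Im2 (qreal (real p) * \<beta>) = sqrt 2 / 2"
  then have "real p * c = 1"
    using c by simp
  then have "int p * c = 1"
    by (metis of_int_1 of_int_eq_iff of_int_mult of_int_of_nat_eq)
  then have "int p = 1 \<or> int p = - 1"
    by (simp add: zmult_eq_1_iff)
  then show False
    using assms(1) by linarith
qed

text \<open>Let \<open>\<delta>\<close> generate the left ideal \<open>H122 p + H122 \<alpha>\<close>, so \<open>N(\<delta>)\<close> divides \<open>p\<^sup>2\<close>. If
  \<open>N(\<delta>) = p\<^sup>2\<close> then \<open>p = u \<delta>\<close> with \<open>u\<close> a unit, so \<open>\<alpha>\<close> is a multiple of \<open>\<delta>\<close> and hence of \<open>p\<close>.
  If \<open>N(\<delta>) = 1\<close> then \<open>\<delta>\<close> is a unit and \<open>conj \<alpha> = conj \<delta> \<delta> conj \<alpha>\<close> is a multiple of \<open>p\<close>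
  because \<open>\<alpha> conj \<alpha> = N(\<alpha>)\<close> is.\<close>
lemma prime_norm_element_if_dvd_qnorm:
  assumes "prime p" "\<alpha> \<in> H122" "qnorm \<alpha> = real p * of_int k"
    and not_mult: "\<And>R. R \<in> H122 \<Longrightarrow> \<alpha> \<noteq> qreal (real p) * R"
  obtains \<delta> where "\<delta> \<in> H122" "qnorm \<delta> = real p"
proof -
  define P where "P = qreal (real p)"
  have "P \<in> H122" "P \<noteq> 0"
    using H122_qreal_of_nat prime_gt_0_nat[OF assms(1)] by (simp_all add: P_def)
  have \<alpha>_qconj: "\<alpha> * qconj \<alpha> = qreal (of_int k) * P"
    using assms(3) by (simp add: mult_qconj P_def qreal_mult[symmetric] mult.commute)
  obtain \<delta> \<xi> \<eta> u w where \<delta>: "\<delta> = \<xi> * P + \<eta> * \<alpha>" "P = u * \<delta>" "\<alpha> = w * \<delta>"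
    and H: "\<xi> \<in> H122" "\<eta> \<in> H122" "u \<in> H122" "w \<in> H122"
    using H122_right_gcd[OF assms(2) \<open>P \<in> H122\<close> \<open>P \<noteq> 0\<close>] by blast
  have "\<delta> \<in> H122"
    using \<delta>(1) H assms(2) \<open>P \<in> H122\<close> by (simp add: H122_add H122_mult)
  moreover have "qnorm u * qnorm \<delta> = real p ^ 2"
    using arg_cong[OF \<delta>(2), of qnorm] by (simp add: P_def qnorm_mult)
  ultimately consider "qnorm u = 1" | "qnorm \<delta> = real p" | "qnorm \<delta> = 1"
    using qnorm_factors_of_prime_square[OF assms(1) \<open>u \<in> H122\<close>] by blast
  then show thesis
  proof cases
    case 1
    have "\<alpha> = w * ((qconj u * u) * \<delta>)"
      using 1 \<delta>(3) by (simp add: qconj_mult_self)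
    also have "\<dots> = (w * qconj u) * P"
      by (simp add: \<delta>(2) mult.assoc)
    also have "\<dots> = P * (w * qconj u)"
      unfolding P_def by (rule qreal_commute[symmetric])
    finally have "\<alpha> = P * (w * qconj u)" .
    moreover have "w * qconj u \<in> H122"
      using H by (simp add: H122_mult H122_qconj)
    ultimately show ?thesis
      using not_mult P_def by blast
  next
    case 2
    then show ?thesis
      using that \<open>\<delta> \<in> H122\<close> by blast
  next
    case 3
    define R where "R = qconj \<delta> * (\<xi> * qconj \<alpha> + \<eta> * qreal (of_int k))"
    have "qconj \<alpha> = qconj \<delta> * \<delta> * qconj \<alpha>"
      using 3 by (simp add: qconj_mult_self)
    also have "\<dots> = qconj \<delta> * (\<xi> * (P * qconj \<alpha>) + \<eta> * (\<alpha> * qconj \<alpha>))"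
      by (simp add: \<delta>(1) algebra_simps)
    also have "\<dots> = R * P"
      unfolding \<alpha>_qconj R_def P_def qreal_commute[of _ "qconj \<alpha>"] by (simp add: algebra_simps)
    finally have "\<alpha> = P * qconj R"
      by (metis P_def qconj_mult qconj_qconj qconj_qreal)
    moreover have "qconj R \<in> H122"
      unfolding R_def using H \<open>\<delta> \<in> H122\<close> assms(2)
      by (intro H122_mult H122_add H122_qconj H122_qreal_of_int)
    ultimately show ?thesis
      using not_mult P_def by blast
  qed
qed

lemma H122_element_of_prime_norm:
  assumes "prime p"
  obtains \<delta> where "\<delta> \<in> H122" "qnorm \<delta> = real p"
proof -
  obtain X Y k :: int where k: "X\<^sup>2 + Y\<^sup>2 + 1 = int p * k"
    using prime_dvd_sum_two_squares_plus_one[of "int p"] assms by (auto elim!: dvdE)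
  \<comment> \<open>\<open>\<alpha> = X + Y i + (j + k) / sqrt 2\<close>\<close>
  define \<alpha> where "\<alpha> = qlin (X - 1) (Y - 1) 1 1"
  have "qnorm \<alpha> = real p * of_int k"
    unfolding \<alpha>_def qnorm_qlin using arg_cong[OF k, of real_of_int]
    by (simp add: power2_eq_square algebra_simps)
  moreover have "\<alpha> \<noteq> qreal (real p) * R" if "R \<in> H122" for R
  proof -
    have "Im2 \<alpha> = sqrt 2 / 2"
      by (simp add: \<alpha>_def qlin_eq_Quat)
    then show ?thesis
      using Im2_qreal_times_H122_ne[OF prime_ge_2_nat[OF assms] that] by metis
  qed
  ultimately show thesis
    using prime_norm_element_if_dvd_qnorm[OF assms qlin_in_H122] that \<alpha>_def by blast
qed

lemma not_H_prime_qreal_prime_times: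
  assumes "prime p" "u \<in> H122"
  shows "\<not> H_prime (qreal (real p) * u)"
proof
  assume prime: "H_prime (qreal (real p) * u)"
  then have "u \<noteq> 0"
    by (auto simp: H_prime_def)
  obtain \<delta> where \<delta>: "\<delta> \<in> H122" "qnorm \<delta> = real p"
    using H122_element_of_prime_norm[OF assms(1)] by blast
  have "qreal (real p) * u = \<delta> * (qconj \<delta> * u)"
    using \<delta>(2) by (simp add: mult.assoc[symmetric] mult_qconj)
  moreover have "qconj \<delta> * u \<in> H122"
    using \<delta>(1) assms(2) by (simp add: H122_mult H122_qconj)
  ultimately have "H_unit \<delta> \<or> H_unit (qconj \<delta> * u)"
    using prime \<delta>(1) by (auto simp: H_prime_def qmul_eq_times)
  moreover have "qnorm (qconj \<delta> * u) \<noteq> 1"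
  proof -
    have "real p * 1 \<le> real p * qnorm u"
      using qnorm_H122_ge_1[OF assms(2) \<open>u \<noteq> 0\<close>] by (intro mult_left_mono) auto
    moreover have "qnorm (qconj \<delta> * u) = real p * qnorm u"
      using \<delta>(2) by (simp add: qnorm_mult)
    moreover have "real p > 1"
      using prime_gt_1_nat[OF assms(1)] by simp
    ultimately show ?thesis
      by linarith
  qed
  ultimately show False
    using \<delta> assms prime_gt_1_nat[OF assms(1)] H_unit_iff_qnorm_eq_1 \<open>qconj \<delta> * u \<in> H122\<close> by auto
qed

lemma qnorm_eq_prime_if_H_prime_divides:
  assumes "H_prime \<pi>" "prime p" "a \<in> H122"
    and divides: "qreal (real p) = \<pi> * a \<or> qreal (real p) = a * \<pi>"
  shows "qnorm \<pi> = real p"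
proof -
  define P where "P = qreal (real p)"
  have \<pi>: "\<pi> \<in> H122" "\<not> H_unit \<pi>"
    using assms(1) by (simp_all add: H_prime_def)
  have "qnorm \<pi> * qnorm a = real p ^ 2"
    using divides by (auto simp: qnorm_mult mult.commute dest: arg_cong[of _ _ qnorm])
  then consider "qnorm \<pi> = 1" | "qnorm \<pi> = real p" | "qnorm a = 1"
    using qnorm_factors_of_prime_square[OF assms(2) \<pi>(1) assms(3)] by blast
  then show ?thesis
  proof cases
    case 1
    then show ?thesis
      using \<pi> H_unit_iff_qnorm_eq_1 by blast
  next
    case 3
    then have unit: "a * qconj a = 1" "qconj a * a = 1"
      by (simp_all add: mult_qconj qconj_mult_self)
    from divides have "\<pi> = P * qconj a"
    proof
      assume "qreal (real p) = \<pi> * a"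
      then show ?thesis
        using unit(1) by (simp add: P_def mult.assoc)
    next
      assume "qreal (real p) = a * \<pi>"
      then have "\<pi> = qconj a * P"
        using unit(2) by (simp add: P_def mult.assoc[symmetric])
      then show ?thesis
        by (simp add: P_def qreal_commute)
    qed
    then show ?thesis
      using assms(1) not_H_prime_qreal_prime_times[OF assms(2) H122_qconj[OF assms(3)]]
      by (simp add: P_def)
  qed
qed

theorem lemma42:
  fixes \<pi> :: quat and p :: nat
  assumes "H_prime \<pi>" and "prime p"
  shows "((\<exists>a\<in>H122. qreal (real p) = \<pi> \<star> a \<or> qreal (real p) = a \<star> \<pi>)
            \<longleftrightarrow> qN \<pi> = qreal (real p))
         \<and> (qN \<pi> = qreal (real p) \<longrightarrow>
              (\<exists>a\<in>H122. qreal (real p) = \<pi> \<star> a) \<and> (\<exists>a\<in>H122. qreal (real p) = a \<star> \<pi>))"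
proof -
  have "qconj \<pi> \<in> H122"
    using assms(1) by (simp add: H_prime_def H122_qconj)
  moreover have "\<pi> * qconj \<pi> = qN \<pi>" "qconj \<pi> * \<pi> = qN \<pi>"
    by (simp_all add: qN_eq_qnorm mult_qconj qconj_mult_self)
  moreover have "qN \<pi> = qreal (real p)"
    if "a \<in> H122" "qreal (real p) = \<pi> * a \<or> qreal (real p) = a * \<pi>" for a
    using qnorm_eq_prime_if_H_prime_divides[OF assms that] by (simp add: qN_eq_qnorm)
  ultimately show ?thesis
    unfolding qmul_eq_times by metis
qed

end
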